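(* $R_{\mathrm{POVM}}(4)=R(4)$, and $\gamma(\omega_{1/3})=N(\tfrac13)$.
   Context: Qubit POVM: finite family $\{\Pi_i\}_{i=1}^n$ of positive semidefinite operators summing to $\mathbb{I}$; it simulates $\{M_{a|x}\}$ if $M_{a|x}=\sum_i p(a|x,i)\Pi_i$ with $p(a|x,i)\ge0$, $\sum_a p(a|x,i)=1$. $\mathcal{P}_r$: two-outcome POVMs $\{\tfrac12(\mathbb{I}\pm r\hat n\cdot\vec\sigma)\}$ over all unit $\hat n\in\mathbb{R}^3$. $R(n)$: supremum of $r$ such that some $n$-outcome qubit POVM simulates $\mathcal{P}_r$. $R_{\mathrm{POVM}}(n)$: supremum of $r$ such that some $n$-outcome qubit POVM simulates the family of all noisy POVMs $\{rM_a+(1-r)\mathrm{Tr}(M_a)\mathbb{I}/2\}_a$, $\{M_a\}$ ranging over all (finite-outcome) qubit POVMs. $N(r)$: smallest $n$ such that some $n$-outcome qubit POVM simulates $\mathcal{P}_r$. $\omega_r=r|\Psi^-\rangle\langle\Psi^-|+(1-r)\mathbb{I}\otimes\mathbb{I}/4$. The assemblage generated from $\rho_{AB}$ by POVMs $\{M_{a|x}\}$ on $A$ is $\sigma_{a|x}=\mathrm{Tr}_A[(M_{a|x}\otimes\mathbb{I})\rho_{AB}]$; an LHS model of size $n$ is a distribution $p(i)$ on $\{1,\dots,n\}$, states $\rho_i$ on $B$ and $p(a|x,i)$ with $\sigma_{a|x}=\sum_{i=1}^n p(a|x,i)p(i)\rho_i$. $\gamma(\rho_{AB})$: smallest $n$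 such that every assemblage generated from $\rho_{AB}$ by any family of POVMs on $A$ admits an LHS model of size $n$. *)

theory Defs
  imports "HOL-Analysis.Analysis"
begin

type_synonym qop = "complex^2^2"
type_synonym qqop = "complex^(2 \<times> 2)^(2 \<times> 2)"

definition psd :: "complex^'n^'n \<Rightarrow> bool" where
  "psd A \<longleftrightarrow> (\<forall>i j. A $ i $ j = cnj (A $ j $ i)) \<and>
     (\<forall>v :: complex^'n. 0 \<le> Re (\<Sum>i\<in>UNIV. cnj (v $ i) * (A *v v) $ i))"

definition density :: "complex^'n^'n \<Rightarrow> bool" where
  "density A \<longleftrightarrow> psd A \<and> trace A = 1"

definition is_povm :: "nat \<Rightarrow> (nat \<Rightarrow> qop) \<Rightarrow> bool" where
  "is_povm n P \<longleftrightarrow> (\<forall>i<n. psd (P i)) \<and> (\<Sum>i<n. P i) = mat 1"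

definition simulates :: "nat \<Rightarrow> (nat \<Rightarrow> qop) \<Rightarrow> 'x set \<Rightarrow> ('x \<Rightarrow> nat) \<Rightarrow> ('x \<Rightarrow> nat \<Rightarrow> qop) \<Rightarrow> bool" where
  "simulates n P X k M \<longleftrightarrow> (\<forall>x\<in>X. \<exists>p :: nat \<Rightarrow> nat \<Rightarrow> real.
      (\<forall>a<k x. \<forall>i<n. 0 \<le> p a i) \<and>
      (\<forall>i<n. (\<Sum>a<k x. p a i) = 1) \<and>
      (\<forall>a<k x. M x a = (\<Sum>i<n. p a i *\<^sub>R P i)))"

definition sigma_x :: qop where
  "sigma_x = (\<chi> i j. if i \<noteq> j then 1 else 0)"
definition sigma_y :: qop where
  "sigma_y = (\<chi> i j. if i = 1 \<and> j = 2 then - \<i> else if i = 2 \<and> j = 1 then \<i> else 0)"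
definition sigma_z :: qop where
  "sigma_z = (\<chi> i j. if i = j then (if i = 1 then 1 else -1) else 0)"

definition pauli_dot :: "real^3 \<Rightarrow> qop" where
  "pauli_dot v = v $ 1 *\<^sub>R sigma_x + v $ 2 *\<^sub>R sigma_y + v $ 3 *\<^sub>R sigma_z"

definition unit_sphere :: "(real^3) set" where
  "unit_sphere = {v. norm v = 1}"

definition Pfam :: "real \<Rightarrow> real^3 \<Rightarrow> nat \<Rightarrow> qop" where
  "Pfam r v a = (if a = 0 then (1/2) *\<^sub>R (mat 1 + r *\<^sub>R pauli_dot v)
                 else (1/2) *\<^sub>R (mat 1 - r *\<^sub>R pauli_dot v))"

definition R :: "nat \<Rightarrow> real" where
  "R n = Sup {r. 0 \<le> r \<and> r \<le> 1 \<and>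
      (\<exists>P. is_povm n P \<and> simulates n P unit_sphere (\<lambda>_. 2) (Pfam r))}"

definition N :: "real \<Rightarrow> nat" where
  "N r = (LEAST n. \<exists>P. is_povm n P \<and> simulates n P unit_sphere (\<lambda>_. 2) (Pfam r))"

text \<open>All finite-outcome qubit POVMs, as pairs (number of outcomes, effects).\<close>
definition all_povms :: "(nat \<times> (nat \<Rightarrow> qop)) set" where
  "all_povms = {(m, M). is_povm m M}"

definition noisy :: "real \<Rightarrow> (nat \<times> (nat \<Rightarrow> qop)) \<Rightarrow> nat \<Rightarrow> qop" where
  "noisy r x a = r *\<^sub>R snd x a + mat (complex_of_real ((1 - r) / 2) * trace (snd x a))"

definition R_POVM :: "nat \<Rightarrow> real" where
  "R_POVM n = Sup {r. 0 \<le> r \<and> r \<le> 1 \<and>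
      (\<exists>P. is_povm n P \<and> simulates n P all_povms fst (noisy r))}"

definition kron :: "qop \<Rightarrow> qop \<Rightarrow> qqop" where
  "kron A B = (\<chi> u w. A $ fst u $ fst w * B $ snd u $ snd w)"

definition ptrace_A :: "qqop \<Rightarrow> qop" where
  "ptrace_A M = (\<chi> j l. \<Sum>i\<in>UNIV. M $ (i, j) $ (i, l))"

text \<open>Singlet |Psi-> = (|01> - |10>)/sqrt 2, basis |0> = index 1, |1> = index 2.\<close>
definition psi_minus :: "complex^(2 \<times> 2)" where
  "psi_minus = (\<chi> u. if fst u = 1 \<and> snd u = 2 then complex_of_real (1 / sqrt 2)
                         else if fst u = 2 \<and> snd u = 1 then - complex_of_real (1 / sqrt 2) else 0)"

definition singlet :: qqop where
  "singlet = (\<chi> a b. psi_minus $ a * cnj (psi_minus $ b))"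

definition omega :: "real \<Rightarrow> qqop" where
  "omega r = r *\<^sub>R singlet + ((1 - r) / 4) *\<^sub>R mat 1"

definition assemblage :: "qqop \<Rightarrow> qop \<Rightarrow> qop" where
  "assemblage \<rho> M = ptrace_A ((kron M (mat 1)) ** \<rho>)"

definition has_LHS :: "nat \<Rightarrow> qqop \<Rightarrow> (nat \<times> (nat \<Rightarrow> qop)) set \<Rightarrow> bool" where
  "has_LHS n \<rho> X \<longleftrightarrow> (\<exists>(q :: nat \<Rightarrow> real) (st :: nat \<Rightarrow> qop) (p :: nat \<times> (nat \<Rightarrow> qop) \<Rightarrow> nat \<Rightarrow> nat \<Rightarrow> real).
      (\<forall>i<n. 0 \<le> q i) \<and> (\<Sum>i<n. q i) = 1 \<and> (\<forall>i<n. density (st i)) \<and>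
      (\<forall>x\<in>X. (\<forall>a<fst x. \<forall>i<n. 0 \<le> p x a i) \<and>
              (\<forall>i<n. (\<Sum>a<fst x. p x a i) = 1) \<and>
              (\<forall>a<fst x. assemblage \<rho> (snd x a) = (\<Sum>i<n. (p x a i * q i) *\<^sub>R st i))))"

definition gamma :: "qqop \<Rightarrow> nat" where
  "gamma \<rho> = (LEAST n. \<forall>X. X \<subseteq> all_povms \<longrightarrow> has_LHS n \<rho> X)"

end

theory Submission
  imports Defs
begin

text \<open>Every Hermitian qubit operator has the Bloch form \<open>c I + b\<cdot>\<sigma>\<close>, and it is positive
  semidefinite iff \<open>\<parallel>b\<parallel> \<le> c\<close>.  The tetrahedral effects \<open>(I + t\<^sub>i\<cdot>\<sigma>)/4\<close> simulate every POVM at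
  visibility \<open>1/3\<close>: the effect \<open>c I + b\<cdot>\<sigma>\<close> is reproduced by the responses \<open>c + \<langle>b, t\<^sub>i\<rangle>\<close>,
  which are nonnegative by Cauchy-Schwarz, because the \<open>t\<^sub>i\<close> form a spherical 2-design
  (\<open>\<Sum>\<^sub>i \<langle>b, t\<^sub>i\<rangle> t\<^sub>i = (4/3) b\<close>).  Conversely, if \<open>n \<le> 4\<close> effects \<open>P\<^sub>i = c\<^sub>i I + b\<^sub>i\<cdot>\<sigma>\<close> simulate the
  projective measurements at visibility \<open>r > 0\<close>, they span the four directions \<open>I, \<sigma>\<^sub>x, \<sigma>\<^sub>y, \<sigma>\<^sub>z\<close>
  and are therefore linearly independent.  Writing the coordinate functional \<open>\<phi>\<close> of \<open>P\<^sub>j\<close> as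
  \<open>\<phi>(v\<cdot>\<sigma>) = \<langle>v, g\<rangle>\<close>, the response probability \<open>1/2 + (r/2) \<langle>v, g\<rangle> \<le> 1\<close> gives \<open>r \<parallel>g\<parallel> \<le> 1\<close>; then
  \<open>1 = \<phi>(P\<^sub>j) \<le> c\<^sub>j + \<parallel>b\<^sub>j\<parallel> \<parallel>g\<parallel>\<close> yields \<open>r \<le> c\<^sub>j (r + 1)\<close>, and summing over \<open>j\<close> gives \<open>n r \<le> r + 1\<close>.
  The same dimension count rules out fewer than four effects, or fewer than four local states.
  Steering \<open>\<omega>\<^sub>r\<close> with \<open>c I + b\<cdot>\<sigma>\<close> gives \<open>(c I - r b\<cdot>\<sigma>)/2\<close>, so the tetrahedral simulation becomes an
  LHS model for \<open>\<omega>\<^sub>1\<^sub>/\<^sub>3\<close> with the states \<open>(I - t\<^sub>i\<cdot>\<sigma>)/2\<close>.\<close>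

section \<open>Bloch representation of qubit operators\<close>

lemma scaleR_complex_eq [simp]: "(x::real) *\<^sub>R (z::complex) = complex_of_real x * z"
  by (simp add: complex_eq_iff)

lemma pauli_dot_entries [simp]:
  "pauli_dot v $ 1 $ 1 = complex_of_real (v$3)"
  "pauli_dot v $ 2 $ 2 = - complex_of_real (v$3)"
  "pauli_dot v $ 1 $ 2 = complex_of_real (v$1) - complex_of_real (v$2) * \<i>"
  "pauli_dot v $ 2 $ 1 = complex_of_real (v$1) + complex_of_real (v$2) * \<i>"
  by (simp_all add: pauli_dot_def sigma_x_def sigma_y_def sigma_z_def)

lemma mat_one_qop_entries [simp]:
  "(mat 1 :: qop) $ 1 $ 1 = 1" "(mat 1 :: qop) $ 2 $ 2 = 1"
  "(mat 1 :: qop) $ 1 $ 2 = 0" "(mat 1 :: qop) $ 2 $ 1 = 0"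
  by (simp_all add: mat_def)

lemma qop_eq_iff:
  "(A::qop) = B \<longleftrightarrow> A$1$1 = B$1$1 \<and> A$1$2 = B$1$2 \<and> A$2$1 = B$2$1 \<and> A$2$2 = B$2$2"
  by (auto simp: vec_eq_iff forall_2)

lemma linear_pauli_dot: "linear pauli_dot"
  by (rule linearI) (simp_all add: pauli_dot_def algebra_simps)

lemmas pauli_dot_scaleR = linear_scale[OF linear_pauli_dot]
lemmas pauli_dot_sum = linear_sum[OF linear_pauli_dot]
lemmas pauli_dot_zero = linear_0[OF linear_pauli_dot]
lemmas pauli_dot_minus = linear_neg[OF linear_pauli_dot]

definition hermitian_op :: "qop \<Rightarrow> bool" where
  "hermitian_op A \<longleftrightarrow> (\<forall>i j. A $ i $ j = cnj (A $ j $ i))"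

lemma hermitian_op_iff:
  "hermitian_op A \<longleftrightarrow> Im (A$1$1) = 0 \<and> Im (A$2$2) = 0 \<and> A$2$1 = cnj (A$1$2)"
  unfolding hermitian_op_def forall_2 by (auto simp: complex_eq_iff)

lemma psd_imp_hermitian_op: "psd A \<Longrightarrow> hermitian_op A"
  unfolding psd_def hermitian_op_def by blast

lemma povm_effect_hermitian: "is_povm m M \<Longrightarrow> a < m \<Longrightarrow> hermitian_op (M a)"
  unfolding is_povm_def using psd_imp_hermitian_op by blast

definition id_coeff :: "qop \<Rightarrow> real" where
  "id_coeff A = Re (A$1$1 + A$2$2) / 2"

definition bloch_vec :: "qop \<Rightarrow> real^3" where
  "bloch_vec A = vector [Re (A$1$2), - Im (A$1$2), Re (A$1$1 - A$2$2) / 2]"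

lemma bloch_vec_components [simp]:
  "bloch_vec A $ 1 = Re (A$1$2)" "bloch_vec A $ 2 = - Im (A$1$2)"
  "bloch_vec A $ 3 = Re (A$1$1 - A$2$2) / 2"
  by (simp_all add: bloch_vec_def)

lemma hermitian_op_bloch_form:
  "hermitian_op A \<Longrightarrow> A = id_coeff A *\<^sub>R mat 1 + pauli_dot (bloch_vec A)"
  unfolding hermitian_op_iff qop_eq_iff id_coeff_def by (simp add: complex_eq_iff field_simps)

lemma id_coeff_bloch_form [simp]: "id_coeff (c *\<^sub>R mat 1 + pauli_dot b) = c"
  by (simp add: id_coeff_def)

lemma bloch_vec_bloch_form [simp]: "bloch_vec (c *\<^sub>R mat 1 + pauli_dot b) = b"
  by (simp add: vec_eq_iff forall_3)

lemma linear_id_coeff: "linear id_coeff"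
  by (rule linearI) (simp_all add: id_coeff_def field_simps)

lemma linear_bloch_vec: "linear bloch_vec"
  by (rule linearI) (simp_all add: vec_eq_iff forall_3 field_simps)

lemma povm_id_coeff_sum: "is_povm m M \<Longrightarrow> (\<Sum>a<m. id_coeff (M a)) = 1"
  unfolding is_povm_def linear_sum[OF linear_id_coeff, symmetric] by (simp add: id_coeff_def)

lemma povm_bloch_vec_sum: "is_povm m M \<Longrightarrow> (\<Sum>a<m. bloch_vec (M a)) = 0"
  unfolding is_povm_def linear_sum[OF linear_bloch_vec, symmetric] by (simp add: vec_eq_iff forall_3)

lemma sum_bloch_forms:
  "(\<Sum>i\<in>S. f i *\<^sub>R (c i *\<^sub>R mat 1 + pauli_dot (b i))) =
     (\<Sum>i\<in>S. f i * c i) *\<^sub>R mat 1 + pauli_dot (\<Sum>i\<in>S. f i *\<^sub>R b i)"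
  by (simp add: scaleR_add_right sum.distrib scaleR_sum_left pauli_dot_sum pauli_dot_scaleR)

lemma hermitian_quadratic_form:
  assumes "hermitian_op A"
  shows "Re (\<Sum>i\<in>UNIV. cnj (v$i) * (A *v v)$i) =
     Re (A$1$1) * (cmod (v$1))\<^sup>2 + Re (A$2$2) * (cmod (v$2))\<^sup>2 + 2 * Re (cnj (v$1) * A$1$2 * v$2)"
  using assms unfolding hermitian_op_iff cmod_power2
  by (simp add: matrix_vector_mult_def sum_2 algebra_simps power2_eq_square)

lemma norm_vec3_le_iff:
  "norm (b::real^3) \<le> c \<longleftrightarrow> 0 \<le> c \<and> (b$1)\<^sup>2 + (b$2)\<^sup>2 + (b$3)\<^sup>2 \<le> c\<^sup>2"
proof -
  have "(norm b)\<^sup>2 = (b$1)\<^sup>2 + (b$2)\<^sup>2 + (b$3)\<^sup>2"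
    unfolding power2_norm_eq_inner inner_vec_def sum_3 by (simp add: power2_eq_square)
  then show ?thesis
    by (metis norm_ge_zero order_trans power2_le_iff_abs_le abs_of_nonneg power_mono)
qed

lemma psd_quadratic_form_nonneg:
  fixes A :: qop
  assumes "psd A"
  shows "0 \<le> Re (A$1$1) * (cmod x)\<^sup>2 + Re (A$2$2) * (cmod y)\<^sup>2 + 2 * Re (cnj x * A$1$2 * y)"
proof -
  define v :: "complex^2" where "v = (\<chi> i. if i = 1 then x else y)"
  have "0 \<le> Re (\<Sum>i\<in>UNIV. cnj (v$i) * (A *v v)$i)" using assms unfolding psd_def by blast
  also have "\<dots> = Re (A$1$1) * (cmod (v$1))\<^sup>2 + Re (A$2$2) * (cmod (v$2))\<^sup>2 + 2 * Re (cnj (v$1) * A$1$2 * v$2)"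
    by (rule hermitian_quadratic_form[OF psd_imp_hermitian_op[OF assms]])
  finally show ?thesis by (simp add: v_def)
qed

text \<open>The minor condition comes from testing the quadratic form on \<open>(t, - cnj A\<^sub>1\<^sub>2)\<close> for all
  real \<open>t\<close>.\<close>

lemma psd_offdiag_le:
  fixes A :: qop
  assumes "psd A"
  shows "0 \<le> Re (A$1$1)" "0 \<le> Re (A$2$2)" "(cmod (A$1$2))\<^sup>2 \<le> Re (A$1$1) * Re (A$2$2)"
proof -
  define a where "a = Re (A$1$1)"
  define d where "d = Re (A$2$2)"
  define w where "w = (cmod (A$1$2))\<^sup>2"
  show a0: "0 \<le> Re (A$1$1)" using psd_quadratic_form_nonneg[OF assms, of 1 0] by simp
  show d0: "0 \<le> Re (A$2$2)" using psd_quadratic_form_nonneg[OF assms, of 0 1] by simp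
  have key: "0 \<le> a * t\<^sup>2 + d * w - 2 * t * w" for t :: real
  proof -
    have "Re (cnj (complex_of_real t) * A$1$2 * (- cnj (A$1$2))) = - t * w"
      unfolding w_def cmod_power2 by (simp add: power2_eq_square algebra_simps)
    then show ?thesis
      using psd_quadratic_form_nonneg[OF assms, of "complex_of_real t" "- cnj (A$1$2)"]
      by (simp add: a_def d_def w_def power2_eq_square)
  qed
  have "w \<le> a * d"
  proof (cases "a = 0")
    case True
    have "(d + 2) * w \<le> 0" using key[of "d + 1"] True by (simp add: algebra_simps)
    then show ?thesis using True d0 by (simp add: d_def w_def mult_le_0_iff)
  next
    case False
    then have ap: "a > 0" using a0 by (simp add: a_def)
    have "0 \<le> a * (w/a)\<^sup>2 + d * w - 2 * (w/a) * w" using key by blast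
    also have "\<dots> = w * (a * d - w) / a" using ap by (simp add: field_simps power2_eq_square)
    finally have "0 \<le> w * (a * d - w)" using ap by (simp add: zero_le_divide_iff)
    then show ?thesis using ap d0 by (auto simp: zero_le_mult_iff w_def d_def)
  qed
  then show "(cmod (A$1$2))\<^sup>2 \<le> Re (A$1$1) * Re (A$2$2)" by (simp add: a_def d_def w_def)
qed

lemma psd_bloch_norm_le:
  assumes "psd A"
  shows "norm (bloch_vec A) \<le> id_coeff A"
proof -
  define a where "a = Re (A$1$1)"
  define d where "d = Re (A$2$2)"
  have "(bloch_vec A $ 1)\<^sup>2 + (bloch_vec A $ 2)\<^sup>2 = (cmod (A$1$2))\<^sup>2"
    unfolding cmod_power2 by simp
  also have "\<dots> \<le> ((a + d)/2)\<^sup>2 - ((a - d)/2)\<^sup>2"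
    using psd_offdiag_le(3)[OF assms] by (simp add: a_def d_def power2_eq_square field_simps)
  finally show ?thesis
    unfolding norm_vec3_le_iff using psd_offdiag_le(1,2)[OF assms]
    by (simp add: id_coeff_def a_def d_def)
qed

lemma AM_GM_weighted:
  fixes p q w X Y :: real
  assumes "0 \<le> p" "0 \<le> q" "w\<^sup>2 \<le> p * q" "0 \<le> w" "0 \<le> X" "0 \<le> Y"
  shows "2 * w * X * Y \<le> p * X\<^sup>2 + q * Y\<^sup>2"
proof (cases "p = 0")
  case True
  then have "w * w \<le> 0" using assms by (simp add: power2_eq_square)
  then have "w = 0" using assms(4) by (metis mult_eq_0_iff mult_nonneg_nonneg order_antisym)
  then show ?thesis using assms True by simp
next
  case False
  then have p: "p > 0" using assms by simp
  have "0 \<le> (p*X - w*Y)\<^sup>2 + (p*q - w\<^sup>2) * Y\<^sup>2" using assms by simp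
  also have "\<dots> = p * (p * X\<^sup>2 + q * Y\<^sup>2 - 2 * w * X * Y)" by (simp add: algebra_simps power2_eq_square)
  finally show ?thesis using p by (simp add: zero_le_mult_iff)
qed

lemma psd_bloch_formI:
  assumes "norm b \<le> c"
  shows "psd (c *\<^sub>R mat 1 + pauli_dot b)"
proof -
  let ?A = "c *\<^sub>R mat 1 + pauli_dot b"
  have h: "hermitian_op ?A" unfolding hermitian_op_iff by simp
  have c: "0 \<le> c" and bb: "(b$1)\<^sup>2 + (b$2)\<^sup>2 + (b$3)\<^sup>2 \<le> c\<^sup>2" using assms norm_vec3_le_iff by auto
  have "(b$3)\<^sup>2 \<le> c\<^sup>2" using bb zero_le_power2[of "b$1"] zero_le_power2[of "b$2"] by linarith
  then have b3: "\<bar>b$3\<bar> \<le> c" using c abs_le_square_iff[of "b$3" c] by simp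
  show ?thesis unfolding psd_def
  proof (intro conjI allI)
    fix i j show "?A $ i $ j = cnj (?A $ j $ i)" using h unfolding hermitian_op_def by blast
  next
    fix v :: "complex^2"
    define z where "z = ?A $ 1 $ 2"
    have "(cmod z)\<^sup>2 = (b$1)\<^sup>2 + (b$2)\<^sup>2" by (simp add: z_def cmod_power2)
    then have "(cmod z)\<^sup>2 \<le> (c + b$3) * (c - b$3)"
      using bb by (simp add: algebra_simps power2_eq_square)
    then have "2 * cmod z * cmod (v$1) * cmod (v$2) \<le> (c + b$3) * (cmod (v$1))\<^sup>2 + (c - b$3) * (cmod (v$2))\<^sup>2"
      using b3 by (intro AM_GM_weighted) auto
    moreover have "- Re (cnj (v$1) * z * v$2) \<le> cmod z * cmod (v$1) * cmod (v$2)"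
      by (metis abs_Re_le_cmod abs_le_D2 complex_mod_cnj mult.commute norm_mult)
    ultimately show "0 \<le> Re (\<Sum>i\<in>UNIV. cnj (v $ i) * (?A *v v) $ i)"
      unfolding hermitian_quadratic_form[OF h] z_def by simp
  qed
qed

lemma noisy_effect_bloch_form:
  "r *\<^sub>R (c *\<^sub>R mat 1 + pauli_dot b) + mat (complex_of_real ((1 - r) / 2) * trace (c *\<^sub>R mat 1 + pauli_dot b))
     = c *\<^sub>R mat 1 + pauli_dot (r *\<^sub>R b)"
proof -
  have "trace (c *\<^sub>R mat 1 + pauli_dot b) = complex_of_real (2 * c)"
    by (simp add: trace_def sum_2 complex_eq_iff)
  then show ?thesis unfolding qop_eq_iff by (simp add: mat_def complex_eq_iff field_simps)
qed

lemma noisy_bloch_form: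
  "is_povm m M \<Longrightarrow> a < m \<Longrightarrow> noisy r (m, M) a = id_coeff (M a) *\<^sub>R mat 1 + pauli_dot (r *\<^sub>R bloch_vec (M a))"
  unfolding noisy_def snd_conv
  by (metis noisy_effect_bloch_form hermitian_op_bloch_form povm_effect_hermitian)

lemma Pfam_bloch_form:
  "Pfam r v a = (1/2) *\<^sub>R mat 1 + pauli_dot (((if a = 0 then r else - r) / 2) *\<^sub>R v)"
  unfolding qop_eq_iff Pfam_def by (simp add: complex_eq_iff)

lemma is_povm_Pfam_one:
  assumes "v \<in> unit_sphere"
  shows "is_povm 2 (Pfam 1 v)"
  unfolding is_povm_def
proof (intro conjI allI impI)
  show "psd (Pfam 1 v a)" for a
    using assms unfolding Pfam_bloch_form by (intro psd_bloch_formI) (simp add: unit_sphere_def)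
  show "(\<Sum>a<2. Pfam 1 v a) = mat 1"
    by (simp add: numeral_2_eq_2 qop_eq_iff Pfam_def complex_eq_iff field_simps)
qed

lemma noisy_Pfam_one:
  assumes "v \<in> unit_sphere" "a < 2"
  shows "noisy r (2, Pfam 1 v) a = Pfam r v a"
  unfolding noisy_bloch_form[OF is_povm_Pfam_one[OF assms(1)] assms(2)] Pfam_bloch_form
  by simp

lemma simulates_noisy_imp_simulates_Pfam:
  assumes "simulates n P all_povms fst (noisy r)"
  shows "simulates n P unit_sphere (\<lambda>_. 2) (Pfam r)"
  unfolding simulates_def
proof
  fix v assume v: "v \<in> unit_sphere"
  have "(2, Pfam 1 v) \<in> all_povms" using is_povm_Pfam_one[OF v] by (simp add: all_povms_def)
  then obtain p where "\<forall>a<2. \<forall>i<n. 0 \<le> p a i" "\<forall>i<n. (\<Sum>a<2. p a i) = 1"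
    and "\<forall>a<2. noisy r (2, Pfam 1 v) a = (\<Sum>i<n. p a i *\<^sub>R P i)"
    using assms unfolding simulates_def by fastforce
  then show "\<exists>p. (\<forall>a<2. \<forall>i<n. 0 \<le> p a i) \<and> (\<forall>i<n. (\<Sum>a<2. p a i) = 1) \<and>
      (\<forall>a<2. Pfam r v a = (\<Sum>i<n. p a i *\<^sub>R P i))"
    using noisy_Pfam_one[OF v] by auto
qed

section \<open>The tetrahedral POVM\<close>

definition tetra :: "nat \<Rightarrow> real^3" where
  "tetra i = (1 / sqrt 3) *\<^sub>R vector [if i = 0 \<or> i = 1 then 1 else -1,
                                    if i = 0 \<or> i = 2 then 1 else -1,
                                    if i = 0 \<or> i = 3 then 1 else -1]"

lemma sum_lessThan_4: "(\<Sum>i<(4::nat). f i) = f 0 + f 1 + f 2 + f 3"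
  by (simp add: eval_nat_numeral)

lemma norm_tetra: "norm (tetra i) = 1"
  unfolding tetra_def norm_scaleR norm_vec_def L2_set_def sum_3 by (simp add: power2_eq_square)

lemma tetra_design: "(\<Sum>i<4. inner \<beta> (tetra i) *\<^sub>R tetra i) = (4/3) *\<^sub>R \<beta>"
  unfolding vec_eq_iff forall_3 sum_lessThan_4
  by (simp add: tetra_def inner_vec_def sum_3 field_simps)

lemma sum_tetra: "(\<Sum>i<4. tetra i) = 0"
  unfolding sum_lessThan_4 by (simp add: tetra_def vec_eq_iff forall_3)

lemma tetra_mixture:
  "(\<Sum>i<4. (\<alpha> + inner \<beta> (tetra i)) *\<^sub>R (c *\<^sub>R mat 1 + pauli_dot (d *\<^sub>R tetra i)))
     = (4 * c * \<alpha>) *\<^sub>R mat 1 + pauli_dot ((4/3 * d) *\<^sub>R \<beta>)"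
proof -
  have "(\<Sum>i<4. (\<alpha> + inner \<beta> (tetra i)) * c) = c * (4 * \<alpha> + inner \<beta> (\<Sum>i<4. tetra i))"
    by (simp add: sum.distrib sum_distrib_left inner_sum_right algebra_simps)
  moreover have "(\<Sum>i<4. (\<alpha> + inner \<beta> (tetra i)) *\<^sub>R d *\<^sub>R tetra i)
      = d *\<^sub>R (\<alpha> *\<^sub>R (\<Sum>i<4. tetra i) + (\<Sum>i<4. inner \<beta> (tetra i) *\<^sub>R tetra i))"
    unfolding scaleR_add_right scaleR_sum_right sum.distrib[symmetric]
    by (rule sum.cong) (simp_all add: distrib_left scaleR_add_left mult.commute)
  ultimately show ?thesis
    unfolding sum_bloch_forms sum_tetra tetra_design by (simp add: mult.commute)
qed

definition tetra_povm :: "nat \<Rightarrow> qop" where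
  "tetra_povm i = (1/4) *\<^sub>R mat 1 + pauli_dot ((1/4) *\<^sub>R tetra i)"

lemma is_povm_tetra_povm: "is_povm 4 tetra_povm"
  unfolding is_povm_def
proof (intro conjI allI impI)
  show "psd (tetra_povm i)" for i
    unfolding tetra_povm_def by (rule psd_bloch_formI) (simp add: norm_tetra)
  show "(\<Sum>i<4. tetra_povm i) = mat 1"
    using tetra_mixture[of 1 0 "1/4" "1/4"] by (simp add: tetra_povm_def pauli_dot_zero)
qed

definition tetra_response :: "qop \<Rightarrow> nat \<Rightarrow> real" where
  "tetra_response A i = id_coeff A + inner (bloch_vec A) (tetra i)"

lemma tetra_response_nonneg: "psd A \<Longrightarrow> 0 \<le> tetra_response A i"
  unfolding tetra_response_def
  using Cauchy_Schwarz_ineq2[of "bloch_vec A" "tetra i"] psd_bloch_norm_le[of A]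
  by (simp add: norm_tetra)

lemma tetra_response_sum: "is_povm m M \<Longrightarrow> (\<Sum>a<m. tetra_response (M a) i) = 1"
  unfolding tetra_response_def
  by (simp add: sum.distrib inner_sum_left[symmetric] povm_id_coeff_sum povm_bloch_vec_sum)

lemma tetra_response_mixture:
  "(\<Sum>i<4. (w * tetra_response A i) *\<^sub>R (c *\<^sub>R mat 1 + pauli_dot (d *\<^sub>R tetra i)))
     = (4 * w * c * id_coeff A) *\<^sub>R mat 1 + pauli_dot ((4/3 * w * d) *\<^sub>R bloch_vec A)"
  using tetra_mixture[of "w * id_coeff A" "w *\<^sub>R bloch_vec A" c d]
  by (simp add: tetra_response_def distrib_left ac_simps)

lemma tetra_povm_simulates_noisy: "simulates 4 tetra_povm all_povms fst (noisy (1/3))"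
  unfolding simulates_def
proof
  fix x assume "x \<in> all_povms"
  then obtain m M where x: "x = (m, M)" and M: "is_povm m M" unfolding all_povms_def by auto
  show "\<exists>p. (\<forall>a<fst x. \<forall>i<4. 0 \<le> p a i) \<and> (\<forall>i<4. (\<Sum>a<fst x. p a i) = 1) \<and>
          (\<forall>a<fst x. noisy (1/3) x a = (\<Sum>i<4. p a i *\<^sub>R tetra_povm i))"
  proof (intro exI[of _ "\<lambda>a. tetra_response (M a)"] conjI allI impI)
    show "0 \<le> tetra_response (M a) i" if "a < fst x" for a i
      using M that x by (intro tetra_response_nonneg) (simp add: is_povm_def)
    show "(\<Sum>a<fst x. tetra_response (M a) i) = 1" for i
      using tetra_response_sum[OF M] x by simp
    show "noisy (1/3) x a = (\<Sum>i<4. tetra_response (M a) i *\<^sub>R tetra_povm i)" if "a < fst x" for a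
      using tetra_response_mixture[of 1 "M a" "1/4" "1/4"] noisy_bloch_form[OF M, of a] that x
      by (simp add: tetra_povm_def)
  qed
qed

section \<open>Dimension counting\<close>

lemma pauli_dot_axis:
  "pauli_dot (axis 1 1) = sigma_x" "pauli_dot (axis 2 1) = sigma_y" "pauli_dot (axis 3 1) = sigma_z"
  by (simp_all add: pauli_dot_def axis_def)

lemma independent_pauli_basis:
  "independent {mat 1 :: qop, sigma_x, sigma_y, sigma_z}"
  "card {mat 1 :: qop, sigma_x, sigma_y, sigma_z} = 4"
proof -
  have "pairwise orthogonal {mat 1 :: qop, sigma_x, sigma_y, sigma_z}"
    unfolding pairwise_insert
    by (auto simp: orthogonal_def inner_vec_def sum_2 inner_complex_def
        sigma_x_def sigma_y_def sigma_z_def mat_def)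
  moreover have "0 \<notin> {mat 1 :: qop, sigma_x, sigma_y, sigma_z}"
    by (auto simp: qop_eq_iff sigma_x_def sigma_y_def sigma_z_def)
  ultimately show "independent {mat 1 :: qop, sigma_x, sigma_y, sigma_z}"
    by (rule pairwise_orthogonal_independent)
  show "card {mat 1 :: qop, sigma_x, sigma_y, sigma_z} = 4"
    by (simp add: qop_eq_iff sigma_x_def sigma_y_def sigma_z_def)
qed

text \<open>Taking \<open>v = \<pm>e\<^sub>k\<close>, half the sum and the difference of \<open>I \<pm> s \<sigma>\<^sub>k\<close> recover \<open>I\<close> and \<open>\<sigma>\<^sub>k\<close>.\<close>

lemma four_le_card_if_bloch_sphere_in_span:
  assumes "finite S" "s \<noteq> 0"
    and sphere: "\<And>v. v \<in> unit_sphere \<Longrightarrow> mat 1 + s *\<^sub>R pauli_dot v \<in> span S"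
  shows "4 \<le> card S"
proof -
  have "mat 1 \<in> span S \<and> pauli_dot (axis k 1) \<in> span S" for k
  proof -
    have plus: "mat 1 + s *\<^sub>R pauli_dot (axis k 1) \<in> span S"
      and minus: "mat 1 - s *\<^sub>R pauli_dot (axis k 1) \<in> span S"
      using sphere[of "axis k 1"] sphere[of "- axis k 1"]
      by (simp_all add: unit_sphere_def pauli_dot_minus)
    have "mat 1 = (1/2) *\<^sub>R ((mat 1 + s *\<^sub>R pauli_dot (axis k 1)) + (mat 1 - s *\<^sub>R pauli_dot (axis k 1)))"
      by (simp add: scaleR_2[symmetric])
    moreover have "pauli_dot (axis k 1) =
        (1 / (2 * s)) *\<^sub>R ((mat 1 + s *\<^sub>R pauli_dot (axis k 1)) - (mat 1 - s *\<^sub>R pauli_dot (axis k 1)))"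
      using \<open>s \<noteq> 0\<close> by (simp add: scaleR_add_left[symmetric])
    ultimately show ?thesis using plus minus by (metis span_add span_diff span_scale)
  qed
  then have "{mat 1, sigma_x, sigma_y, sigma_z} \<subseteq> span S"
    by (auto simp flip: pauli_dot_axis)
  then show ?thesis
    using independent_span_bound[OF \<open>finite S\<close> independent_pauli_basis(1)]
    by (simp add: independent_pauli_basis(2))
qed

lemma simulated_effect_in_span:
  assumes "simulates n P unit_sphere (\<lambda>_. 2) (Pfam r)" "v \<in> unit_sphere"
  shows "mat 1 + r *\<^sub>R pauli_dot v \<in> span (P ` {..<n})"
proof -
  obtain p where "Pfam r v 0 = (\<Sum>i<n. p i *\<^sub>R P i)"
    using assms unfolding simulates_def by fastforce
  moreover have "mat 1 + r *\<^sub>R pauli_dot v = 2 *\<^sub>R Pfam r v 0"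
    by (simp add: Pfam_bloch_form pauli_dot_scaleR scaleR_add_right)
  moreover have "(\<Sum>i<n. p i *\<^sub>R P i) \<in> span (P ` {..<n})"
    by (intro span_sum span_scale span_base) auto
  ultimately show ?thesis
    by (simp add: span_scale)
qed

lemma four_le_if_simulates_Pfam:
  assumes "simulates n P unit_sphere (\<lambda>_. 2) (Pfam r)" "r \<noteq> 0"
  shows "4 \<le> n"
  using four_le_card_if_bloch_sphere_in_span[OF _ \<open>r \<noteq> 0\<close> simulated_effect_in_span[OF assms(1)]]
    card_image_le[of "{..<n}" P] by simp

section \<open>Upper bound on the visibility\<close>

lemma separating_linear_functional:
  fixes x :: "'a::euclidean_space"
  assumes "x \<notin> span S"
  obtains \<phi> :: "'a \<Rightarrow> real" where "linear \<phi>" "\<phi> x = 1" "\<And>s. s \<in> S \<Longrightarrow> \<phi> s = 0"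
proof -
  obtain y z where y: "y \<in> span S" and z: "\<And>w. w \<in> span S \<Longrightarrow> orthogonal z w" and x: "x = y + z"
    using orthogonal_subspace_decomp_exists[of S x] by blast
  have "z \<noteq> 0" using assms x y by auto
  moreover have "inner y z = 0" using z[OF y] by (simp add: orthogonal_def inner_commute)
  ultimately have "inner x z / inner z z = 1" by (simp add: x inner_add_left)
  moreover have "inner s z / inner z z = 0" if "s \<in> S" for s
    using z[OF span_base[OF that]] by (simp add: orthogonal_def inner_commute)
  moreover have "linear (\<lambda>w. inner w z / inner z z)"
    by (intro linearI) (simp_all add: inner_add_left add_divide_distrib)
  ultimately show ?thesis using that by blast
qed

text \<open>The coordinate of a simulated effect along \<open>P\<^sub>j\<close> is a response probability.\<close>

lemma coordinate_functional_simulated_effect: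
  fixes \<phi> :: "qop \<Rightarrow> real"
  assumes sim: "simulates n P X (\<lambda>_. 2) M" and "x \<in> X" "a < 2" "j < n"
    and \<phi>: "linear \<phi>" "\<And>i. i < n \<Longrightarrow> \<phi> (P i) = (if i = j then 1 else 0)"
  shows "\<phi> (M x a) \<le> 1"
proof -
  obtain p where p: "\<forall>b<2. \<forall>i<n. 0 \<le> p b i" "\<forall>i<n. (\<Sum>b<2. p b i) = 1"
    and M: "\<forall>b<2. M x b = (\<Sum>i<n. p b i *\<^sub>R P i)"
    using sim \<open>x \<in> X\<close> unfolding simulates_def by blast
  have "\<phi> (M x b) = p b j" if "b < 2" for b
  proof -
    have "\<phi> (M x b) = (\<Sum>i<n. p b i * \<phi> (P i))"
      using M that by (simp add: linear_sum[OF \<phi>(1)] linear_scale[OF \<phi>(1)])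
    also have "\<dots> = (\<Sum>i<n. if i = j then p b j else 0)" by (rule sum.cong) (simp_all add: \<phi>(2))
    also have "\<dots> = p b j" using \<open>j < n\<close> by simp
    finally show ?thesis .
  qed
  moreover have "p a j \<le> 1"
  proof -
    have "p 0 j + p 1 j = 1" using p(2) \<open>j < n\<close> by (simp add: numeral_2_eq_2)
    moreover have "0 \<le> p 0 j" "0 \<le> p 1 j" using p(1) \<open>j < n\<close> by auto
    moreover have "a = 0 \<or> a = 1" using \<open>a < 2\<close> by auto
    ultimately show ?thesis by auto
  qed
  ultimately show ?thesis using \<open>a < 2\<close> by simp
qed

lemma simulating_effects_independent:
  assumes "n \<le> 4" and sim: "simulates n P unit_sphere (\<lambda>_. 2) (Pfam r)" and "r \<noteq> 0" "j < n"
  shows "P j \<notin> span (P ` ({..<n} - {j}))"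
proof
  assume "P j \<in> span (P ` ({..<n} - {j}))"
  then have "P ` {..<n} \<subseteq> span (P ` ({..<n} - {j}))" by (auto intro: span_base)
  then have "span (P ` {..<n}) \<subseteq> span (P ` ({..<n} - {j}))" by (simp add: span_minimal)
  then have "4 \<le> card (P ` ({..<n} - {j}))"
    using simulated_effect_in_span[OF sim] \<open>r \<noteq> 0\<close>
    by (intro four_le_card_if_bloch_sphere_in_span) auto
  moreover have "card (P ` ({..<n} - {j})) < 4"
    using card_image_le[of "{..<n} - {j}" P] \<open>j < n\<close> \<open>n \<le> 4\<close> by simp
  ultimately show False by simp
qed

lemma coordinate_functional_pauli_bound:
  fixes \<phi> :: "qop \<Rightarrow> real"
  assumes sim: "simulates n P unit_sphere (\<lambda>_. 2) (Pfam r)" and "j < n"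
    and \<phi>: "linear \<phi>" "\<And>i. i < n \<Longrightarrow> \<phi> (P i) = (if i = j then 1 else 0)" "\<phi> (mat 1) = 1"
    and g: "\<And>v. \<phi> (pauli_dot v) = inner v g"
  shows "r * norm g \<le> 1"
proof (cases "g = 0")
  case False
  define v where "v = (1 / norm g) *\<^sub>R g"
  have v: "v \<in> unit_sphere" using False by (simp add: unit_sphere_def v_def)
  have "\<phi> (Pfam r v 0) = 1/2 + r/2 * norm g"
    using False by (simp add: Pfam_bloch_form linear_add[OF \<phi>(1)] linear_scale[OF \<phi>(1)]
        \<phi>(3) g v_def dot_square_norm power2_eq_square)
  then show ?thesis
    using coordinate_functional_simulated_effect[OF sim v _ \<open>j < n\<close> \<phi>(1,2), of 0] by simp
qed simp

lemma effect_weight_bound: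
  assumes P: "is_povm n P" and "n \<le> 4" and sim: "simulates n P unit_sphere (\<lambda>_. 2) (Pfam r)"
    and "0 \<le> r" and j: "j < n"
  shows "r \<le> id_coeff (P j) * (r + 1)"
proof -
  define c b where "c = id_coeff (P j)" and "b = bloch_vec (P j)"
  have "psd (P j)" using P j by (simp add: is_povm_def)
  then have Pj: "P j = c *\<^sub>R mat 1 + pauli_dot b" and "norm b \<le> c"
    using hermitian_op_bloch_form psd_imp_hermitian_op psd_bloch_norm_le by (auto simp: b_def c_def)
  show ?thesis
  proof (cases "r = 0")
    case True
    have "0 \<le> c" using \<open>norm b \<le> c\<close> norm_ge_zero[of b] by linarith
    then show ?thesis using True by (simp add: c_def)
  next
    case False
    obtain \<phi> :: "qop \<Rightarrow> real"
      where \<phi>: "linear \<phi>" "\<phi> (P j) = 1" "\<And>s. s \<in> P ` ({..<n} - {j}) \<Longrightarrow> \<phi> s = 0"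
      using separating_linear_functional simulating_effects_independent[OF \<open>n \<le> 4\<close> sim False j]
      by blast
    then have \<phi>_coord: "\<And>i. i < n \<Longrightarrow> \<phi> (P i) = (if i = j then 1 else 0)" by auto
    have "\<phi> (mat 1) = (\<Sum>i<n. \<phi> (P i))"
      using P unfolding is_povm_def by (metis linear_sum[OF \<phi>(1)])
    also have "\<dots> = 1" using \<phi>_coord j by (simp cong: if_cong)
    finally have \<phi>_one: "\<phi> (mat 1) = 1" .
    define g where "g = adjoint (\<phi> \<circ> pauli_dot) 1"
    have g: "\<phi> (pauli_dot v) = inner v g" for v
      using adjoint_works[OF linear_compose[OF linear_pauli_dot \<phi>(1)], of v 1] by (simp add: g_def)
    have "1 = c + inner b g"
      using \<phi>(2) by (simp add: Pj linear_add[OF \<phi>(1)] linear_scale[OF \<phi>(1)] \<phi>_one g)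
    also have "\<dots> \<le> c + norm b * norm g" using norm_cauchy_schwarz[of b g] by simp
    finally have "r * 1 \<le> r * (c + norm b * norm g)" using \<open>0 \<le> r\<close> by (rule mult_left_mono)
    then have "r \<le> r * c + norm b * (r * norm g)" by (simp add: algebra_simps)
    also have "\<dots> \<le> r * c + c"
      using mult_left_mono[OF coordinate_functional_pauli_bound[OF sim j \<phi>(1) \<phi>_coord \<phi>_one g]
          norm_ge_zero[of b]] \<open>norm b \<le> c\<close> by simp
    finally show ?thesis by (simp add: c_def algebra_simps)
  qed
qed

lemma visibility_bound:
  assumes P: "is_povm n P" and "n \<le> 4" and "simulates n P unit_sphere (\<lambda>_. 2) (Pfam r)"
    and "0 \<le> r"
  shows "real n * r \<le> r + 1"
proof -
  have "real n * r = (\<Sum>j<n. r)" by simp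
  also have "\<dots> \<le> (\<Sum>j<n. id_coeff (P j) * (r + 1))"
    using effect_weight_bound[OF assms] by (intro sum_mono) auto
  also have "\<dots> = r + 1" by (simp add: sum_distrib_right[symmetric] povm_id_coeff_sum[OF P])
  finally show ?thesis .
qed

section \<open>Steering the noisy singlet\<close>

lemma psi_minus_entries [simp]:
  "psi_minus $ (1,1) = 0" "psi_minus $ (1,2) = complex_of_real (1 / sqrt 2)"
  "psi_minus $ (2,1) = - complex_of_real (1 / sqrt 2)" "psi_minus $ (2,2) = 0"
  by (simp_all add: psi_minus_def)

lemma omega_entry:
  "omega r $ u $ w = complex_of_real r * (psi_minus $ u * cnj (psi_minus $ w))
     + complex_of_real ((1 - r)/4) * (if u = w then 1 else 0)"
  by (simp add: omega_def singlet_def mat_def)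

lemma assemblage_entry:
  "assemblage \<rho> M $ j $ l = (\<Sum>i\<in>UNIV. \<Sum>k\<in>UNIV. M$i$k * \<rho> $ (k,j) $ (i,l))"
proof -
  have "assemblage \<rho> M $ j $ l = (\<Sum>i\<in>UNIV. \<Sum>k\<in>UNIV. \<Sum>m\<in>UNIV. kron M (mat 1) $ (i,j) $ (k,m) * \<rho> $ (k,m) $ (i,l))"
    by (simp add: assemblage_def ptrace_A_def matrix_matrix_mult_def sum.cartesian_product
        flip: UNIV_Times_UNIV)
  also have "\<dots> = (\<Sum>i\<in>UNIV. \<Sum>k\<in>UNIV. M$i$k * \<rho> $ (k,j) $ (i,l))"
    by (simp add: kron_def mat_def if_distrib if_distribR cong: if_cong)
  finally show ?thesis .
qed

text \<open>Steering flips the Bloch vector: the singlet is anti-correlated in every direction.\<close>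

lemma assemblage_omega_bloch_form:
  "assemblage (omega r) (c *\<^sub>R mat 1 + pauli_dot b) = (c/2) *\<^sub>R mat 1 + pauli_dot ((- r/2) *\<^sub>R b)"
proof -
  have sqrt_2: "sqrt 2 * (sqrt 2 * x) = 2 * x" for x :: real
    by (simp add: mult.assoc[symmetric])
  show ?thesis
    unfolding qop_eq_iff assemblage_entry
    by (simp add: complex_eq_iff sum_2 omega_entry field_simps sqrt_2)
qed

definition tetra_state :: "nat \<Rightarrow> qop" where
  "tetra_state i = (1/2) *\<^sub>R mat 1 + pauli_dot ((-1/2) *\<^sub>R tetra i)"

lemma density_tetra_state: "density (tetra_state i)"
  unfolding density_def
proof
  show "psd (tetra_state i)"
    unfolding tetra_state_def by (rule psd_bloch_formI) (simp add: norm_tetra)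
  show "trace (tetra_state i) = 1" by (simp add: tetra_state_def trace_def sum_2)
qed

lemma has_LHS_omega_third: "X \<subseteq> all_povms \<Longrightarrow> has_LHS 4 (omega (1/3)) X"
  unfolding has_LHS_def
proof (intro exI[of _ "\<lambda>_. 1/4"] exI[of _ tetra_state] exI[of _ "\<lambda>x a. tetra_response (snd x a)"]
    conjI ballI allI impI density_tetra_state)
  assume X: "X \<subseteq> all_povms"
  fix x assume "x \<in> X"
  then obtain m M where x: "x = (m, M)" and M: "is_povm m M" using X unfolding all_povms_def by auto
  show "0 \<le> tetra_response (snd x a) i" if "a < fst x" for a i
    using M that x by (intro tetra_response_nonneg) (simp add: is_povm_def)
  show "(\<Sum>a<fst x. tetra_response (snd x a) i) = 1" for i
    using tetra_response_sum[OF M] x by simp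
  show "assemblage (omega (1/3)) (snd x a) = (\<Sum>i<4. (tetra_response (snd x a) i * (1/4)) *\<^sub>R tetra_state i)"
    if "a < fst x" for a
    using tetra_response_mixture[of "1/4" "M a" "1/2" "-1/2"]
      assemblage_omega_bloch_form[of "1/3" "id_coeff (M a)" "bloch_vec (M a)"]
      hermitian_op_bloch_form[OF povm_effect_hermitian[OF M, of a]] that x
    by (simp add: tetra_state_def mult.commute)
qed simp_all

text \<open>Steering with \<open>\<P>\<^sub>1\<close> produces the operators \<open>(I - r v\<cdot>\<sigma>)/4\<close>, which must lie in the span of
  the local states.\<close>

lemma four_le_if_has_LHS_omega:
  assumes lhs: "has_LHS n (omega r) all_povms" and "r \<noteq> 0"
  shows "4 \<le> n"
proof -
  obtain q st p where
    model: "\<forall>x\<in>all_povms. \<forall>a<fst x. assemblage (omega r) (snd x a) = (\<Sum>i<n. (p x a i * q i) *\<^sub>R st i)"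
    using lhs unfolding has_LHS_def by blast
  have "mat 1 + (- r) *\<^sub>R pauli_dot v \<in> span (st ` {..<n})" if v: "v \<in> unit_sphere" for v
  proof -
    have "(2, Pfam 1 v) \<in> all_povms" using is_povm_Pfam_one[OF v] by (simp add: all_povms_def)
    then have "assemblage (omega r) (Pfam 1 v 0) = (\<Sum>i<n. (p (2, Pfam 1 v) 0 i * q i) *\<^sub>R st i)"
      using model by fastforce
    moreover have "mat 1 + (- r) *\<^sub>R pauli_dot v = 4 *\<^sub>R assemblage (omega r) (Pfam 1 v 0)"
      unfolding Pfam_bloch_form assemblage_omega_bloch_form
      by (simp add: pauli_dot_scaleR pauli_dot_minus scaleR_diff_right)
    moreover have "(\<Sum>i<n. (p (2, Pfam 1 v) 0 i * q i) *\<^sub>R st i) \<in> span (st ` {..<n})"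
      by (intro span_sum span_scale span_base) auto
    ultimately show ?thesis by (simp add: span_scale)
  qed
  then show ?thesis
    using four_le_card_if_bloch_sphere_in_span[of "st ` {..<n}" "- r"] \<open>r \<noteq> 0\<close>
      card_image_le[of "{..<n}" st] by simp
qed

lemma tetra_povm_simulates_Pfam: "simulates 4 tetra_povm unit_sphere (\<lambda>_. 2) (Pfam (1/3))"
  by (rule simulates_noisy_imp_simulates_Pfam[OF tetra_povm_simulates_noisy])

lemma R_POVM_4: "R_POVM 4 = 1/3"
  unfolding R_POVM_def
proof (rule cSup_eq_maximum)
  show "1/3 \<in> {r. 0 \<le> r \<and> r \<le> 1 \<and> (\<exists>P. is_povm 4 P \<and> simulates 4 P all_povms fst (noisy r))}"
    using is_povm_tetra_povm tetra_povm_simulates_noisy by auto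
  show "r \<le> 1/3" if "r \<in> {r. 0 \<le> r \<and> r \<le> 1 \<and> (\<exists>P. is_povm 4 P \<and> simulates 4 P all_povms fst (noisy r))}" for r
    using that visibility_bound[of 4 _ r] simulates_noisy_imp_simulates_Pfam by fastforce
qed

lemma R_4: "R 4 = 1/3"
  unfolding R_def
proof (rule cSup_eq_maximum)
  show "1/3 \<in> {r. 0 \<le> r \<and> r \<le> 1 \<and> (\<exists>P. is_povm 4 P \<and> simulates 4 P unit_sphere (\<lambda>_. 2) (Pfam r))}"
    using is_povm_tetra_povm tetra_povm_simulates_Pfam by auto
  show "r \<le> 1/3" if "r \<in> {r. 0 \<le> r \<and> r \<le> 1 \<and> (\<exists>P. is_povm 4 P \<and> simulates 4 P unit_sphere (\<lambda>_. 2) (Pfam r))}" for r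
    using that visibility_bound[of 4 _ r] by fastforce
qed

lemma N_third: "N (1/3) = 4"
  unfolding N_def
  using is_povm_tetra_povm tetra_povm_simulates_Pfam four_le_if_simulates_Pfam[of _ _ "1/3"]
  by (intro Least_equality) auto

lemma gamma_omega_third: "gamma (omega (1/3)) = 4"
  unfolding gamma_def
  using has_LHS_omega_third four_le_if_has_LHS_omega[of _ "1/3"]
  by (intro Least_equality) auto

theorem mainTheorem16:
  shows "R_POVM 4 = R 4 \<and> gamma (omega (1/3)) = N (1/3)"
  by (simp add: R_POVM_4 R_4 gamma_omega_third N_third)

end
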